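(* Consider the weighted stochastic block model: there are $r$ latent communities labelled $1,\ldots,r$; each node $i$ is independently assigned a latent community $Z_i$ with $\mathbb{P}(Z_i=z)=p_z>0$ for $z=1,\ldots,r$ (so $\boldsymbol{p}=(p_1,\ldots,p_r)'$ sums to one); each unordered pair of distinct nodes $i\neq j$ carries a real-valued edge weight $X_{i,j}=X_{j,i}$, where, conditional on the community indicators, the edge weights are independent and $X_{i,j}$ has distribution function $F_{z_1,z_2}(x)=\mathbb{P}(X_{i,j}\le x\mid Z_i=z_1,Z_j=z_2)$. Let $F_z(x):=\mathbb{P}(X_{i,j}\le x\mid Z_i=z)=\sum_{z'=1}^r F_{z,z'}(x)\,p_{z'}$. Suppose that the functions $F_1,\ldots,F_r$ are linearly independent. Then: (i) The number of communities $r$ is nonparametrically recoverable (uniquely determined) from the joint distribution of the edge weights $(X_{1,2},X_{1,3})$ of a two-star subgraph on three distinct nodes $1,2,3$ (edges $\{1,2\},\{1,3\}$). (ii) The community distribution $\boldsymbol{p}$, as well as, for a given function $\varphi$, the conditional expectations $$\varphi_{z_1,z_2}:=\mathbb{E}(\varphi(X_{i,j})\mid Z_i=z_1,Z_j=z_2),\qquad 1\le z_1,z_2\le r,$$ are nonparametrically recoverable (uniquely determined up to a common relabeling of the latent communities) from the joint distribution of the edge weights $(X_{1,2},X_{1,3},X_{1,4})$ of a three-star subgraph on four distinct nodes and the joint distribution of the edge weights $(X_{1,2},X_{1,3},X_{3,4})$ of a path subgraph on four distinct nodes $1,2,3,4$.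
   Context: "Nonparametrically recoverable" means that the quantity is uniquely determined by the indicated distribution of observed edge weights, without any parametric restrictions on the distributions $F_{z_1,z_2}$, among all weighted stochastic block models satisfying the stated assumptions; "up to relabeling" means up to a single permutation of the community labels $1,\ldots,r$ applied simultaneously to all components. *)

theory Defs
  imports "HOL-Probability.Probability"
begin

text \<open>Weighted stochastic block model with r communities labelled 1..r.
  p z = P(Z_i = z); F z1 z2 = conditional law of X_{i,j} given Z_i = z1, Z_j = z2
  (a Borel probability measure on the reals; its distribution function is
  x |-> measure (F z1 z2) {..x}).\<close>

definition wsbm_cdf :: "(nat \<Rightarrow> nat \<Rightarrow> real measure) \<Rightarrow> nat \<Rightarrow> nat \<Rightarrow> real \<Rightarrow> real" where
  "wsbm_cdf F z1 z2 x = measure (F z1 z2) {..x}"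

definition wsbm_marg_cdf ::
  "nat \<Rightarrow> (nat \<Rightarrow> real) \<Rightarrow> (nat \<Rightarrow> nat \<Rightarrow> real measure) \<Rightarrow> nat \<Rightarrow> real \<Rightarrow> real" where
  "wsbm_marg_cdf r p F z x = (\<Sum>z'\<in>{1..r}. wsbm_cdf F z z' x * p z')"

definition wsbm :: "nat \<Rightarrow> (nat \<Rightarrow> real) \<Rightarrow> (nat \<Rightarrow> nat \<Rightarrow> real measure) \<Rightarrow> bool" where
  "wsbm r p F \<longleftrightarrow>
     (\<forall>z\<in>{1..r}. p z > 0) \<and> (\<Sum>z\<in>{1..r}. p z) = 1 \<and>
     (\<forall>z1\<in>{1..r}. \<forall>z2\<in>{1..r}.
        prob_space (F z1 z2) \<and> sets (F z1 z2) = sets borel \<and> F z1 z2 = F z2 z1) \<and>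
     (\<forall>c :: nat \<Rightarrow> real.
        (\<forall>x. (\<Sum>z\<in>{1..r}. c z * wsbm_marg_cdf r p F z x) = 0) \<longrightarrow> (\<forall>z\<in>{1..r}. c z = 0))"

text \<open>Joint distribution function of the edge weights (X_{e_1},...,X_{e_m}) of a
  subgraph with nodes 1..n and distinct edges E = [e_1,...,e_m]:
  P(X_{e_1} <= x_1, ..., X_{e_m} <= x_m), obtained by averaging over the i.i.d.
  community labels of the nodes and using conditional independence of the edge weights.\<close>
definition wsbm_joint_cdf ::
  "nat \<Rightarrow> (nat \<Rightarrow> real) \<Rightarrow> (nat \<Rightarrow> nat \<Rightarrow> real measure) \<Rightarrow> nat \<Rightarrow> (nat \<times> nat) list
    \<Rightarrow> real list \<Rightarrow> real" where
  "wsbm_joint_cdf r p F n E xs =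
     (\<Sum>z \<in> {1..n} \<rightarrow>\<^sub>E {1..r}.
        (\<Prod>v\<in>{1..n}. p (z v)) *
        (\<Prod>k<length E. wsbm_cdf F (z (fst (E ! k))) (z (snd (E ! k))) (xs ! k)))"

definition two_star :: "(nat \<times> nat) list" where "two_star = [(1,2),(1,3)]"
definition three_star :: "(nat \<times> nat) list" where "three_star = [(1,2),(1,3),(1,4)]"
definition path4 :: "(nat \<times> nat) list" where "path4 = [(1,2),(1,3),(3,4)]"

end

theory Submission
  imports Defs
begin

text \<open>Write f z for the marginal distribution functions F_z of one model and g w for those of
  the other. Conditioning on the label of the centre node, the two-star and three-star distribution
  functions are sum_z p_z f_z(x) f_z(y) and sum_z p_z f_z(x) f_z(y) f_z(t). Linear independence
  of the f z yields dual linear functionals; applied to the two-star identity they show that both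
  families span the same space, and the mutually inverse change-of-basis matrices have equal
  traces, so r = r'. In the three-star identity, extracting coefficients in two of the three
  variables shows that every f c is a multiple of some g w, and since both are distribution
  functions the multiple is 1; this matches the communities and their weights. Finally the path
  distribution function sum_{a,c} p_a p_c F_{a,c}(y) f_a(x) f_c(t) is a bilinear form in the
  independent f's, so it determines every edge law F_{a,c}, and with it every expectation of
  phi(X).\<close>

definition lin_indep :: "'i set \<Rightarrow> ('i \<Rightarrow> 'a \<Rightarrow> real) \<Rightarrow> bool" where
  "lin_indep I f \<longleftrightarrow> (\<forall>c. (\<forall>x. (\<Sum>z\<in>I. c z * f z x) = 0) \<longrightarrow> (\<forall>z\<in>I. c z = 0))"

definition linear_functional :: "(('a \<Rightarrow> real) \<Rightarrow> real) \<Rightarrow> bool" where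
  "linear_functional L \<longleftrightarrow> (\<forall>a b h k. L (\<lambda>x. a * h x + b * k x) = a * L h + b * L k)"

lemma lin_indep_coeff_eq:
  assumes "lin_indep I f" "\<And>x. (\<Sum>z\<in>I. a z * f z x) = (\<Sum>z\<in>I. b z * f z x)" "c \<in> I"
  shows "a c = b c"
proof -
  have "\<forall>x. (\<Sum>z\<in>I. (a z - b z) * f z x) = 0"
    using assms(2) by (simp add: left_diff_distrib sum_subtractf)
  then show ?thesis
    using assms(1,3) unfolding lin_indep_def by fastforce
qed

lemma lin_indep_subset:
  assumes "lin_indep I f" "S \<subseteq> I" "finite I"
  shows "lin_indep S f"
  unfolding lin_indep_def
proof (intro allI impI ballI)
  fix c z
  assume zero: "\<forall>x. (\<Sum>z\<in>S. c z * f z x) = 0" and "z \<in> S"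
  have "(\<Sum>z\<in>I. (of_bool (z \<in> S) * c z) * f z x) = (\<Sum>z\<in>S. c z * f z x)" for x
    using assms(2,3) by (simp add: mult.assoc sum_of_bool_mult_eq Int_absorb1)
  then have "\<forall>x. (\<Sum>z\<in>I. (of_bool (z \<in> S) * c z) * f z x) = 0"
    using zero by simp
  then show "c z = 0"
    using assms(1,2) \<open>z \<in> S\<close> unfolding lin_indep_def by fastforce
qed

lemma lin_indep_nonzero:
  assumes "lin_indep I f" "finite I" "c \<in> I"
  shows "\<exists>x. f c x \<noteq> 0"
proof (rule ccontr)
  assume "\<not> (\<exists>x. f c x \<noteq> 0)"
  then have "(\<Sum>z\<in>I. of_bool (z = c) * f z x) = (\<Sum>z\<in>I. 0 * f z x)" for x
    using assms(2,3) by simp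
  from lin_indep_coeff_eq[OF assms(1) this assms(3)] show False by simp
qed

lemma lin_indep_inj_on:
  assumes "lin_indep I f" "finite I"
  shows "inj_on f I"
proof (rule inj_onI)
  fix c c'
  assume "c \<in> I" "c' \<in> I" "f c = f c'"
  then have "(\<Sum>z\<in>I. of_bool (z = c) * f z x) = (\<Sum>z\<in>I. of_bool (z = c') * f z x)" for x
    using assms(2) by simp
  from lin_indep_coeff_eq[OF assms(1) this \<open>c \<in> I\<close>] show "c = c'" by simp
qed

lemma linear_functionalD:
  "linear_functional L \<Longrightarrow> L (\<lambda>x. a * h x + b * k x) = a * L h + b * L k"
  unfolding linear_functional_def by blast

lemma linear_functional_sum:
  assumes "linear_functional L" "finite I"
  shows "L (\<lambda>x. \<Sum>z\<in>I. a z * h z x) = (\<Sum>z\<in>I. a z * L (h z))"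
  using assms(2)
proof (induction I rule: finite_induct)
  case empty
  show ?case
    using linear_functionalD[OF assms(1), where a = 0 and b = 0] by simp
next
  case (insert s S)
  show ?case
    using insert linear_functionalD[OF assms(1), of "a s" "h s" 1 "\<lambda>x. \<Sum>z\<in>S. a z * h z x"] by simp
qed

text \<open>Gram--Schmidt-like elimination: the new functional evaluates the residual of the projection
  onto the span of the old family at a point where the residual of the new function does not vanish.\<close>

lemma dual_functionals_insert:
  assumes "finite S" "s \<notin> S" "lin_indep (insert s S) f"
    and lin: "\<forall>z\<in>S. linear_functional (L z)"
    and dual: "\<forall>z\<in>S. \<forall>z'\<in>S. L z (f z') = of_bool (z = z')"
  shows "\<exists>L'. (\<forall>z\<in>insert s S. linear_functional (L' z)) \<and>
              (\<forall>z\<in>insert s S. \<forall>z'\<in>insert s S. L' z (f z') = of_bool (z = z'))"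
proof -
  define res where "res h x = h x - (\<Sum>z\<in>S. L z h * f z x)" for h x
  have res_S: "res (f z') x = 0" if "z' \<in> S" for z' x
    using that assms(1) dual by (simp add: res_def)
  have res_linear: "res (\<lambda>x. a * h x + b * k x) x = a * res h x + b * res k x" for a b h k x
  proof -
    have "(\<Sum>z\<in>S. L z (\<lambda>x. a * h x + b * k x) * f z x) = (\<Sum>z\<in>S. (a * L z h + b * L z k) * f z x)"
      using lin by (intro sum.cong) (simp_all add: linear_functionalD)
    then show ?thesis
      by (simp add: res_def sum.distrib sum_distrib_left algebra_simps)
  qed
  have "\<exists>x0. res (f s) x0 \<noteq> 0"
  proof (rule ccontr)
    assume "\<nexists>x0. res (f s) x0 \<noteq> 0"
    then have "(\<Sum>z\<in>insert s S. of_bool (z = s) * f z x)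
             = (\<Sum>z\<in>insert s S. (if z = s then 0 else L z (f s)) * f z x)" for x
      using assms(1,2) by (auto simp: res_def intro: sum.cong)
    from lin_indep_coeff_eq[OF assms(3) this insertI1] show False by simp
  qed
  then obtain x0 where x0: "res (f s) x0 \<noteq> 0" ..
  define Ls where "Ls h = res h x0 / res (f s) x0" for h
  define L' where "L' z = (if z = s then Ls else (\<lambda>h. L z h - L z (f s) * Ls h))" for z
  have "linear_functional Ls"
    unfolding linear_functional_def Ls_def res_linear by (simp add: add_divide_distrib)
  then have "\<forall>z\<in>insert s S. linear_functional (L' z)"
    using lin unfolding linear_functional_def L'_def by (simp add: algebra_simps)
  moreover have "\<forall>z\<in>insert s S. \<forall>z'\<in>insert s S. L' z (f z') = of_bool (z = z')"
    using dual res_S x0 assms(2) by (auto simp: L'_def Ls_def)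
  ultimately show ?thesis by blast
qed

lemma lin_indep_dual_functionals:
  assumes "finite I" "lin_indep I f"
  shows "\<exists>L. (\<forall>z\<in>I. linear_functional (L z)) \<and> (\<forall>z\<in>I. \<forall>z'\<in>I. L z (f z') = of_bool (z = z'))"
  using assms
proof (induction I rule: finite_induct)
  case empty
  then show ?case by simp
next
  case (insert s S)
  then obtain L where "\<forall>z\<in>S. linear_functional (L z)" "\<forall>z\<in>S. \<forall>z'\<in>S. L z (f z') = of_bool (z = z')"
    using lin_indep_subset[of "insert s S" f S] by blast
  then show ?case
    using dual_functionals_insert[OF insert.hyps insert.prems] by blast
qed

lemma lin_indep_coeffs_linear:
  assumes "finite I" "finite J" "lin_indep I f"
  shows "\<exists>N. \<forall>a b. (\<forall>x. (\<Sum>z\<in>I. a z * f z x) = (\<Sum>w\<in>J. b w * g w x))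
                 \<longrightarrow> (\<forall>c\<in>I. a c = (\<Sum>w\<in>J. N c w * b w))"
proof -
  obtain L where lin: "\<forall>z\<in>I. linear_functional (L z)"
    and dual: "\<forall>z\<in>I. \<forall>z'\<in>I. L z (f z') = of_bool (z = z')"
    using lin_indep_dual_functionals[OF assms(1,3)] by blast
  have "a c = (\<Sum>w\<in>J. L c (g w) * b w)"
    if eq: "\<forall>x. (\<Sum>z\<in>I. a z * f z x) = (\<Sum>w\<in>J. b w * g w x)" and c: "c \<in> I" for a b c
  proof -
    have "a c = (\<Sum>z\<in>I. a z * L c (f z))"
      using dual c assms(1) by simp
    also have "\<dots> = L c (\<lambda>x. \<Sum>z\<in>I. a z * f z x)"
      using lin c assms(1) by (simp add: linear_functional_sum)
    also have "\<dots> = L c (\<lambda>x. \<Sum>w\<in>J. b w * g w x)"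
      using eq by simp
    also have "\<dots> = (\<Sum>w\<in>J. L c (g w) * b w)"
      using lin c assms(2) by (simp add: linear_functional_sum mult.commute)
    finally show ?thesis .
  qed
  then show ?thesis
    by (intro exI[of _ "\<lambda>c w. L c (g w)"]) blast
qed

lemma two_star_span:
  assumes "finite I" "finite J" "lin_indep I f" "\<forall>z\<in>I. p z \<noteq> 0"
    and two_star: "\<And>x y. (\<Sum>z\<in>I. p z * f z x * f z y) = (\<Sum>w\<in>J. q w * g w x * g w y)"
  shows "\<exists>N. \<forall>c\<in>I. \<forall>y. f c y = (\<Sum>w\<in>J. N c w * g w y)"
proof -
  obtain N where N: "\<And>a b c. \<forall>x. (\<Sum>z\<in>I. a z * f z x) = (\<Sum>w\<in>J. b w * g w x) \<Longrightarrow> c \<in> I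
      \<Longrightarrow> a c = (\<Sum>w\<in>J. N c w * b w)"
    using lin_indep_coeffs_linear[OF assms(1-3)] by blast
  have "f c y = (\<Sum>w\<in>J. (N c w * q w / p c) * g w y)" if c: "c \<in> I" for c y
  proof -
    have "\<forall>x. (\<Sum>z\<in>I. (p z * f z y) * f z x) = (\<Sum>w\<in>J. (q w * g w y) * g w x)"
      using two_star by (simp add: mult_ac)
    from N[OF this c] have "p c * f c y = (\<Sum>w\<in>J. N c w * (q w * g w y))" .
    then have "f c y = (\<Sum>w\<in>J. N c w * (q w * g w y)) / p c"
      using assms(4) c by (simp add: field_simps)
    then show ?thesis
      by (simp add: sum_divide_distrib mult_ac)
  qed
  then show ?thesis
    by (intro exI[of _ "\<lambda>c w. N c w * q w / p c"]) blast
qed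

lemma span_coeffs_compose:
  assumes "finite I" "lin_indep I f"
    and N: "\<forall>c\<in>I. \<forall>y. f c y = (\<Sum>w\<in>J. N c w * g w y)"
    and M: "\<forall>w\<in>J. \<forall>y. g w y = (\<Sum>c\<in>I. M w c * f c y)"
    and "c \<in> I" "c' \<in> I"
  shows "(\<Sum>w\<in>J. N c w * M w c') = of_bool (c = c')"
proof -
  have "(\<Sum>c'\<in>I. (\<Sum>w\<in>J. N c w * M w c') * f c' y) = (\<Sum>c'\<in>I. of_bool (c = c') * f c' y)" for y
  proof -
    have "(\<Sum>c'\<in>I. (\<Sum>w\<in>J. N c w * M w c') * f c' y) = (\<Sum>w\<in>J. N c w * (\<Sum>c'\<in>I. M w c' * f c' y))"
      by (simp add: sum_distrib_left sum_distrib_right mult_ac sum.swap[of _ I])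
    also have "\<dots> = f c y"
      using M N \<open>c \<in> I\<close> by simp
    finally show ?thesis
      using assms(1,5) by simp
  qed
  from lin_indep_coeff_eq[OF assms(2) this assms(6)] show ?thesis .
qed

lemma mutual_span_card_eq:
  assumes "finite I" "finite J" "lin_indep I f" "lin_indep J g"
    and N: "\<forall>c\<in>I. \<forall>y. f c y = (\<Sum>w\<in>J. N c w * g w y)"
    and M: "\<forall>w\<in>J. \<forall>y. g w y = (\<Sum>c\<in>I. M w c * f c y)"
  shows "card I = card J"
proof -
  have "real (card I) = (\<Sum>c\<in>I. \<Sum>w\<in>J. N c w * M w c)"
    using span_coeffs_compose[OF assms(1,3) N M] by simp
  also have "\<dots> = (\<Sum>w\<in>J. \<Sum>c\<in>I. M w c * N c w)"
    by (subst sum.swap) (simp add: mult.commute)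
  also have "\<dots> = real (card J)"
    using span_coeffs_compose[OF assms(2,4) M N] by simp
  finally show ?thesis by simp
qed

lemma two_star_card_eq:
  assumes "finite I" "finite J" "lin_indep I f" "lin_indep J g"
    and "\<forall>z\<in>I. p z \<noteq> 0" "\<forall>w\<in>J. q w \<noteq> 0"
    and two_star: "\<And>x y. (\<Sum>z\<in>I. p z * f z x * f z y) = (\<Sum>w\<in>J. q w * g w x * g w y)"
  shows "card I = card J"
proof -
  obtain N where "\<forall>c\<in>I. \<forall>y. f c y = (\<Sum>w\<in>J. N c w * g w y)"
    using two_star_span[OF assms(1,2,3,5) two_star] by blast
  moreover obtain M where "\<forall>w\<in>J. \<forall>y. g w y = (\<Sum>c\<in>I. M w c * f c y)"
    using two_star_span[OF assms(2,1,4,6) two_star[symmetric]] by blast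
  ultimately show ?thesis
    using mutual_span_card_eq[OF assms(1-4)] by blast
qed

lemma three_star_imp_two_star:
  fixes f g :: "'i \<Rightarrow> real \<Rightarrow> real"
  assumes "\<forall>c\<in>I. (f c \<longlongrightarrow> 1) at_top" "\<forall>w\<in>J. (g w \<longlongrightarrow> 1) at_top"
    and three_star: "\<And>x y t. (\<Sum>z\<in>I. p z * f z x * f z y * f z t) = (\<Sum>w\<in>J. q w * g w x * g w y * g w t)"
  shows "(\<Sum>z\<in>I. p z * f z x * f z y) = (\<Sum>w\<in>J. q w * g w x * g w y)"
proof -
  have "((\<lambda>t. \<Sum>z\<in>I. p z * f z x * f z y * f z t) \<longlongrightarrow> (\<Sum>z\<in>I. p z * f z x * f z y * 1)) at_top"
    using assms(1) by (intro tendsto_sum tendsto_mult_left) auto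
  moreover have "((\<lambda>t. \<Sum>z\<in>I. p z * f z x * f z y * f z t) \<longlongrightarrow> (\<Sum>w\<in>J. q w * g w x * g w y * 1)) at_top"
    unfolding three_star using assms(2) by (intro tendsto_sum tendsto_mult_left) auto
  ultimately show ?thesis
    using tendsto_unique[OF trivial_limit_at_top_linorder] by fastforce
qed

lemma three_star_proportional:
  assumes "finite I" "finite J" "lin_indep I f" "lin_indep J g"
    and N: "\<forall>c\<in>I. \<forall>y. f c y = (\<Sum>w\<in>J. N c w * g w y)"
    and three_star: "\<And>x y t. (\<Sum>z\<in>I. p z * f z x * f z y * f z t) = (\<Sum>w\<in>J. q w * g w x * g w y * g w t)"
  shows "\<exists>K. \<forall>c\<in>I. \<forall>w\<in>J. \<forall>x. p c * N c w * f c x = K c w * g w x"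
proof -
  obtain N' where N': "\<And>a b c. \<forall>t. (\<Sum>z\<in>I. a z * f z t) = (\<Sum>w\<in>J. b w * g w t) \<Longrightarrow> c \<in> I
      \<Longrightarrow> a c = (\<Sum>w\<in>J. N' c w * b w)"
    using lin_indep_coeffs_linear[OF assms(1-3)] by blast
  have "p c * N c w * f c x = (N' c w * q w) * g w x" if c: "c \<in> I" and w: "w \<in> J" for c w x
  proof -
    have "(\<Sum>w\<in>J. (p c * f c x * N c w) * g w y) = (\<Sum>w\<in>J. (N' c w * q w * g w x) * g w y)" for y
    proof -
      have "(\<Sum>w\<in>J. (p c * f c x * N c w) * g w y) = p c * f c x * (\<Sum>w\<in>J. N c w * g w y)"
        by (simp add: sum_distrib_left mult_ac)
      also have "\<dots> = p c * f c x * f c y"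
        using N c by simp
      also have "\<dots> = (\<Sum>w\<in>J. N' c w * (q w * g w x * g w y))"
        using N'[OF _ c, of "\<lambda>z. p z * f z x * f z y" "\<lambda>w. q w * g w x * g w y"] three_star by blast
      finally show ?thesis
        by (simp add: mult_ac)
    qed
    from lin_indep_coeff_eq[OF assms(4) this w] show ?thesis
      by (simp add: mult_ac)
  qed
  then show ?thesis
    by (intro exI[of _ "\<lambda>c w. N' c w * q w"]) blast
qed

lemma three_star_component_match:
  fixes f g :: "'i \<Rightarrow> real \<Rightarrow> real"
  assumes "finite I" "finite J" "lin_indep I f" "lin_indep J g" "\<forall>z\<in>I. p z \<noteq> 0"
    and lim_f: "\<forall>c\<in>I. (f c \<longlongrightarrow> 1) at_top" and lim_g: "\<forall>w\<in>J. (g w \<longlongrightarrow> 1) at_top"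
    and three_star: "\<And>x y t. (\<Sum>z\<in>I. p z * f z x * f z y * f z t) = (\<Sum>w\<in>J. q w * g w x * g w y * g w t)"
    and c: "c \<in> I"
  shows "\<exists>w\<in>J. g w = f c"
proof -
  obtain N where N: "\<forall>c\<in>I. \<forall>y. f c y = (\<Sum>w\<in>J. N c w * g w y)"
    using two_star_span[OF assms(1,2,3,5) three_star_imp_two_star[OF lim_f lim_g three_star]] by blast
  obtain K where K: "\<forall>c\<in>I. \<forall>w\<in>J. \<forall>x. p c * N c w * f c x = K c w * g w x"
    using three_star_proportional[OF assms(1-4) N three_star] by blast
  have "\<exists>w\<in>J. N c w \<noteq> 0"
  proof (rule ccontr)
    assume "\<not> (\<exists>w\<in>J. N c w \<noteq> 0)"
    then have "f c y = 0" for y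
      using N c by simp
    then show False
      using lin_indep_nonzero[OF assms(3,1) c] by simp
  qed
  then obtain w where w: "w \<in> J" "N c w \<noteq> 0" ..
  define \<kappa> where "\<kappa> = K c w / (p c * N c w)"
  have f_c: "f c = (\<lambda>x. \<kappa> * g w x)"
    using K c w assms(5) by (force simp: \<kappa>_def field_simps)
  have "(f c \<longlongrightarrow> 1) at_top"
    using lim_f c by blast
  then have "((\<lambda>x. \<kappa> * g w x) \<longlongrightarrow> 1) at_top"
    by (simp only: f_c)
  moreover have "((\<lambda>x. \<kappa> * g w x) \<longlongrightarrow> \<kappa> * 1) at_top"
    using lim_g w by (intro tendsto_mult_left) auto
  ultimately have "\<kappa> = 1"
    using tendsto_unique[OF trivial_limit_at_top_linorder] by fastforce
  then show ?thesis
    using f_c w by auto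
qed

lemma three_star_matching:
  fixes f g :: "'i \<Rightarrow> real \<Rightarrow> real"
  assumes "finite I" "finite J" "lin_indep I f" "lin_indep J g"
    and "\<forall>z\<in>I. p z \<noteq> 0" "\<forall>w\<in>J. q w \<noteq> 0"
    and lim_f: "\<forall>c\<in>I. (f c \<longlongrightarrow> 1) at_top" and lim_g: "\<forall>w\<in>J. (g w \<longlongrightarrow> 1) at_top"
    and three_star: "\<And>x y t. (\<Sum>z\<in>I. p z * f z x * f z y * f z t) = (\<Sum>w\<in>J. q w * g w x * g w y * g w t)"
  shows "\<exists>\<sigma>. bij_betw \<sigma> I J \<and> (\<forall>c\<in>I. g (\<sigma> c) = f c \<and> q (\<sigma> c) = p c)"
proof -
  obtain \<sigma> where \<sigma>: "\<forall>c\<in>I. \<sigma> c \<in> J \<and> g (\<sigma> c) = f c"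
    using three_star_component_match[OF assms(1-5) lim_f lim_g three_star] by metis
  obtain \<tau> where \<tau>: "\<forall>w\<in>J. \<tau> w \<in> I \<and> f (\<tau> w) = g w"
    using three_star_component_match[OF assms(2,1,4,3,6) lim_g lim_f three_star[symmetric]] by metis
  have inj_\<sigma>: "inj_on \<sigma> I"
    using lin_indep_inj_on[OF assms(3,1)] \<sigma> by (metis inj_on_def)
  have "inj_on \<tau> J"
    using lin_indep_inj_on[OF assms(4,2)] \<tau> by (metis inj_on_def)
  then have "card J \<le> card I"
    using \<tau> assms(1) by (intro card_inj_on_le) auto
  moreover have "card I \<le> card J"
    using inj_\<sigma> \<sigma> assms(2) by (intro card_inj_on_le) auto
  ultimately have "\<sigma> ` I = J"
    using \<sigma> inj_\<sigma> assms(2) by (intro card_subset_eq) (auto simp: card_image)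
  then have bij: "bij_betw \<sigma> I J"
    using inj_\<sigma> by (simp add: bij_betw_def)
  have "q (\<sigma> c) = p c" if c: "c \<in> I" for c
  proof -
    have "(\<Sum>z\<in>I. (p z * f z x) * f z y) = (\<Sum>z\<in>I. (q (\<sigma> z) * f z x) * f z y)" for x y
    proof -
      have "(\<Sum>z\<in>I. (p z * f z x) * f z y) = (\<Sum>w\<in>J. q w * g w x * g w y)"
        using three_star_imp_two_star[OF lim_f lim_g three_star] by simp
      also have "\<dots> = (\<Sum>z\<in>I. q (\<sigma> z) * g (\<sigma> z) x * g (\<sigma> z) y)"
        by (rule sum.reindex_bij_betw[OF bij, symmetric])
      finally show ?thesis
        using \<sigma> by simp
    qed
    from lin_indep_coeff_eq[OF assms(3) this c] have "p c * f c x = q (\<sigma> c) * f c x" for x .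
    moreover obtain x where "f c x \<noteq> 0"
      using lin_indep_nonzero[OF assms(3,1) c] ..
    ultimately show ?thesis by (metis mult_cancel_right)
  qed
  with bij \<sigma> show ?thesis by blast
qed

lemma lin_indep_bilinear_coeff_eq:
  assumes "lin_indep I f" "lin_indep K h"
    and eq: "\<And>x y. (\<Sum>a\<in>I. \<Sum>c\<in>K. A a c * f a x * h c y) = (\<Sum>a\<in>I. \<Sum>c\<in>K. B a c * f a x * h c y)"
    and "a \<in> I" "c \<in> K"
  shows "A a c = B a c"
proof -
  have swapped: "(\<Sum>c\<in>K. (\<Sum>a\<in>I. A a c * f a x) * h c y) = (\<Sum>c\<in>K. (\<Sum>a\<in>I. B a c * f a x) * h c y)" for x y
    using eq[of x y] by (simp add: sum_distrib_right sum.swap[of _ K])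
  have "(\<Sum>a\<in>I. A a c * f a x) = (\<Sum>a\<in>I. B a c * f a x)" for x
    by (rule lin_indep_coeff_eq[OF assms(2) swapped assms(5)])
  from lin_indep_coeff_eq[OF assms(1) this assms(4)] show ?thesis .
qed

lemma wsbm_lin_indep: "wsbm r p F \<Longrightarrow> lin_indep {1..r} (wsbm_marg_cdf r p F)"
  unfolding wsbm_def lin_indep_def by blast

lemma wsbm_weight_pos: "wsbm r p F \<Longrightarrow> z \<in> {1..r} \<Longrightarrow> p z > 0"
  unfolding wsbm_def by blast

lemma wsbm_real_distribution:
  "wsbm r p F \<Longrightarrow> z1 \<in> {1..r} \<Longrightarrow> z2 \<in> {1..r} \<Longrightarrow> real_distribution (F z1 z2)"
  unfolding wsbm_def by (auto simp: real_distribution_def real_distribution_axioms_def)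

lemma wsbm_cdf_eq_cdf: "wsbm_cdf F z1 z2 = cdf (F z1 z2)"
  by (simp add: fun_eq_iff wsbm_cdf_def cdf_def)

lemma wsbm_marg_cdf_at_top:
  assumes "wsbm r p F" "c \<in> {1..r}"
  shows "(wsbm_marg_cdf r p F c \<longlongrightarrow> 1) at_top"
proof -
  have "((\<lambda>x. \<Sum>z\<in>{1..r}. wsbm_cdf F c z x * p z) \<longlongrightarrow> (\<Sum>z\<in>{1..r}. 1 * p z)) at_top"
    using real_distribution.cdf_lim_at_top_prob[OF wsbm_real_distribution[OF assms]]
    by (intro tendsto_sum tendsto_mult_right) (simp add: wsbm_cdf_eq_cdf)
  moreover have "(\<Sum>z\<in>{1..r}. 1 * p z) = 1"
    using assms(1) unfolding wsbm_def by simp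
  ultimately show ?thesis
    by (simp add: wsbm_marg_cdf_def[abs_def])
qed

lemma sum_PiE_insert:
  assumes "x \<notin> S"
  shows "(\<Sum>g\<in>Pi\<^sub>E (insert x S) T. h g) = (\<Sum>y\<in>T x. \<Sum>g\<in>Pi\<^sub>E S T. h (g(x := y)))"
  unfolding PiE_insert_eq
  by (subst sum.reindex[OF inj_combinator[OF assms]]) (simp add: sum.cartesian_product case_prod_unfold)

lemma wsbm_joint_cdf_two_star:
  "wsbm_joint_cdf r p F 3 two_star [x1, x2] =
    (\<Sum>a\<in>{1..r}. p a * wsbm_marg_cdf r p F a x1 * wsbm_marg_cdf r p F a x2)"
proof -
  have "{1..3::nat} = {1, 2, 3}" "{..<2::nat} = {0, 1}" by auto
  then have "wsbm_joint_cdf r p F 3 two_star [x1, x2] = (\<Sum>a\<in>{1..r}. \<Sum>b\<in>{1..r}. \<Sum>c\<in>{1..r}.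
      p a * p b * p c * (wsbm_cdf F a b x1 * wsbm_cdf F a c x2))"
    unfolding wsbm_joint_cdf_def two_star_def by (simp add: sum_PiE_insert mult_ac)
  then show ?thesis
    unfolding wsbm_marg_cdf_def by (simp add: sum_distrib_left sum_distrib_right mult_ac)
qed

lemma wsbm_joint_cdf_three_star:
  "wsbm_joint_cdf r p F 4 three_star [x1, x2, x3] =
    (\<Sum>a\<in>{1..r}. p a * wsbm_marg_cdf r p F a x1 * wsbm_marg_cdf r p F a x2 * wsbm_marg_cdf r p F a x3)"
proof -
  have "{1..4::nat} = {1, 2, 3, 4}" "{..<3::nat} = {0, 1, 2}" by auto
  then have "wsbm_joint_cdf r p F 4 three_star [x1, x2, x3] = (\<Sum>a\<in>{1..r}. \<Sum>b\<in>{1..r}. \<Sum>c\<in>{1..r}. \<Sum>d\<in>{1..r}.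
      p a * p b * p c * p d * (wsbm_cdf F a b x1 * wsbm_cdf F a c x2 * wsbm_cdf F a d x3))"
    unfolding wsbm_joint_cdf_def three_star_def by (simp add: sum_PiE_insert mult_ac)
  then show ?thesis
    unfolding wsbm_marg_cdf_def by (simp add: sum_distrib_left sum_distrib_right mult_ac)
qed

lemma wsbm_joint_cdf_path4:
  "wsbm_joint_cdf r p F 4 path4 [x1, x2, x3] =
    (\<Sum>a\<in>{1..r}. \<Sum>c\<in>{1..r}. p a * p c * wsbm_cdf F a c x2 * wsbm_marg_cdf r p F a x1 * wsbm_marg_cdf r p F c x3)"
proof -
  have "{1..4::nat} = {1, 2, 3, 4}" "{..<3::nat} = {0, 1, 2}" by auto
  then have "wsbm_joint_cdf r p F 4 path4 [x1, x2, x3] = (\<Sum>a\<in>{1..r}. \<Sum>b\<in>{1..r}. \<Sum>c\<in>{1..r}. \<Sum>d\<in>{1..r}.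
      p a * p b * p c * p d * (wsbm_cdf F a b x1 * wsbm_cdf F a c x2 * wsbm_cdf F c d x3))"
    unfolding wsbm_joint_cdf_def path4_def by (simp add: sum_PiE_insert mult_ac)
  also have "\<dots> = (\<Sum>a\<in>{1..r}. \<Sum>c\<in>{1..r}. \<Sum>b\<in>{1..r}. \<Sum>d\<in>{1..r}.
      p a * p b * p c * p d * (wsbm_cdf F a b x1 * wsbm_cdf F a c x2 * wsbm_cdf F c d x3))"
    by (intro sum.cong refl sum.swap)
  finally show ?thesis
    unfolding wsbm_marg_cdf_def by (simp add: sum_distrib_left sum_distrib_right mult_ac)
qed

lemma wsbm_edge_law_eq:
  assumes "wsbm r p F" "wsbm r' p' F'" and bij: "bij_betw \<sigma> {1..r} {1..r'}"
    and match: "\<forall>c\<in>{1..r}. wsbm_marg_cdf r' p' F' (\<sigma> c) = wsbm_marg_cdf r p F c \<and> p' (\<sigma> c) = p c"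
    and path: "\<And>x1 x2 x3. wsbm_joint_cdf r p F 4 path4 [x1, x2, x3] = wsbm_joint_cdf r' p' F' 4 path4 [x1, x2, x3]"
    and a: "a \<in> {1..r}" and c: "c \<in> {1..r}"
  shows "F' (\<sigma> a) (\<sigma> c) = F a c"
proof (rule cdf_unique)
  have "\<sigma> a \<in> {1..r'}" "\<sigma> c \<in> {1..r'}"
    using bij a c by (auto simp: bij_betw_def)
  then show "real_distribution (F' (\<sigma> a) (\<sigma> c))"
    using wsbm_real_distribution[OF assms(2)] by blast
  show "real_distribution (F a c)"
    using wsbm_real_distribution[OF assms(1) a c] .
  let ?f = "wsbm_marg_cdf r p F" and ?g = "wsbm_marg_cdf r' p' F'"
  have "p a * p c * wsbm_cdf F' (\<sigma> a) (\<sigma> c) x2 = p a * p c * wsbm_cdf F a c x2" for x2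
  proof (rule lin_indep_bilinear_coeff_eq[OF wsbm_lin_indep[OF assms(1)] wsbm_lin_indep[OF assms(1)] _ a c])
    fix x1 x3
    have "(\<Sum>a\<in>{1..r}. \<Sum>c\<in>{1..r}. p a * p c * wsbm_cdf F a c x2 * ?f a x1 * ?f c x3)
        = (\<Sum>u\<in>{1..r'}. \<Sum>v\<in>{1..r'}. p' u * p' v * wsbm_cdf F' u v x2 * ?g u x1 * ?g v x3)"
      using path by (simp add: wsbm_joint_cdf_path4)
    also have "\<dots> = (\<Sum>a\<in>{1..r}. \<Sum>v\<in>{1..r'}. p' (\<sigma> a) * p' v * wsbm_cdf F' (\<sigma> a) v x2 * ?g (\<sigma> a) x1 * ?g v x3)"
      by (rule sum.reindex_bij_betw[OF bij, symmetric])
    also have "\<dots> = (\<Sum>a\<in>{1..r}. \<Sum>c\<in>{1..r}. p' (\<sigma> a) * p' (\<sigma> c) * wsbm_cdf F' (\<sigma> a) (\<sigma> c) x2 * ?g (\<sigma> a) x1 * ?g (\<sigma> c) x3)"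
      by (intro sum.cong refl sum.reindex_bij_betw[OF bij, symmetric])
    also have "\<dots> = (\<Sum>a\<in>{1..r}. \<Sum>c\<in>{1..r}. p a * p c * wsbm_cdf F' (\<sigma> a) (\<sigma> c) x2 * ?f a x1 * ?f c x3)"
      using match by (intro sum.cong refl) auto
    finally show "(\<Sum>a\<in>{1..r}. \<Sum>c\<in>{1..r}. p a * p c * wsbm_cdf F' (\<sigma> a) (\<sigma> c) x2 * ?f a x1 * ?f c x3)
        = (\<Sum>a\<in>{1..r}. \<Sum>c\<in>{1..r}. p a * p c * wsbm_cdf F a c x2 * ?f a x1 * ?f c x3)" ..
  qed
  moreover have "p a * p c \<noteq> 0"
    using wsbm_weight_pos[OF assms(1) a] wsbm_weight_pos[OF assms(1) c] by simp
  ultimately show "cdf (F' (\<sigma> a) (\<sigma> c)) = cdf (F a c)"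
    by (simp add: fun_eq_iff wsbm_cdf_eq_cdf)
qed

lemma wsbm_two_star_determines_size:
  assumes "wsbm r p F" "wsbm r' p' F'"
    and "\<And>x1 x2. wsbm_joint_cdf r p F 3 two_star [x1, x2] = wsbm_joint_cdf r' p' F' 3 two_star [x1, x2]"
  shows "r = r'"
proof -
  have "card {1..r} = card {1..r'}"
  proof (rule two_star_card_eq)
    show "lin_indep {1..r} (wsbm_marg_cdf r p F)" "lin_indep {1..r'} (wsbm_marg_cdf r' p' F')"
      using wsbm_lin_indep[OF assms(1)] wsbm_lin_indep[OF assms(2)] .
    show "\<forall>z\<in>{1..r}. p z \<noteq> 0" "\<forall>z\<in>{1..r'}. p' z \<noteq> 0"
      using wsbm_weight_pos[OF assms(1)] wsbm_weight_pos[OF assms(2)] by force+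
  qed (use assms(3) in \<open>simp_all add: wsbm_joint_cdf_two_star\<close>)
  then show ?thesis by simp
qed

lemma wsbm_three_star_path_determine_params:
  assumes "wsbm r p F" "wsbm r' p' F'"
    and three_star: "\<And>x1 x2 x3. wsbm_joint_cdf r p F 4 three_star [x1, x2, x3]
                                = wsbm_joint_cdf r' p' F' 4 three_star [x1, x2, x3]"
    and path: "\<And>x1 x2 x3. wsbm_joint_cdf r p F 4 path4 [x1, x2, x3] = wsbm_joint_cdf r' p' F' 4 path4 [x1, x2, x3]"
  shows "\<exists>\<sigma>. bij_betw \<sigma> {1..r} {1..r'} \<and> (\<forall>z\<in>{1..r}. p' (\<sigma> z) = p z) \<and>
               (\<forall>z1\<in>{1..r}. \<forall>z2\<in>{1..r}. F' (\<sigma> z1) (\<sigma> z2) = F z1 z2)"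
proof -
  let ?f = "wsbm_marg_cdf r p F" and ?g = "wsbm_marg_cdf r' p' F'"
  have "\<exists>\<sigma>. bij_betw \<sigma> {1..r} {1..r'} \<and> (\<forall>c\<in>{1..r}. ?g (\<sigma> c) = ?f c \<and> p' (\<sigma> c) = p c)"
  proof (rule three_star_matching)
    show "lin_indep {1..r} ?f" "lin_indep {1..r'} ?g"
      using wsbm_lin_indep[OF assms(1)] wsbm_lin_indep[OF assms(2)] .
    show "\<forall>z\<in>{1..r}. p z \<noteq> 0" "\<forall>z\<in>{1..r'}. p' z \<noteq> 0"
      using wsbm_weight_pos[OF assms(1)] wsbm_weight_pos[OF assms(2)] by force+
    show "\<forall>c\<in>{1..r}. (?f c \<longlongrightarrow> 1) at_top" "\<forall>c\<in>{1..r'}. (?g c \<longlongrightarrow> 1) at_top"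
      using wsbm_marg_cdf_at_top[OF assms(1)] wsbm_marg_cdf_at_top[OF assms(2)] by blast+
  qed (use three_star in \<open>simp_all add: wsbm_joint_cdf_three_star\<close>)
  then obtain \<sigma> where bij: "bij_betw \<sigma> {1..r} {1..r'}"
    and match: "\<forall>c\<in>{1..r}. ?g (\<sigma> c) = ?f c \<and> p' (\<sigma> c) = p c"
    by blast
  show ?thesis
    using bij match wsbm_edge_law_eq[OF assms(1,2) bij match path] by blast
qed

theorem theorem1:
  fixes r r' :: nat and p p' :: "nat \<Rightarrow> real" and F F' :: "nat \<Rightarrow> nat \<Rightarrow> real measure"
  assumes "wsbm r p F" and "wsbm r' p' F'"
  shows "((\<forall>x1 x2. wsbm_joint_cdf r p F 3 two_star [x1, x2]
                 = wsbm_joint_cdf r' p' F' 3 two_star [x1, x2]) \<longrightarrow> r = r')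
     \<and> (\<forall>\<phi> :: real \<Rightarrow> real.
          \<phi> \<in> borel_measurable borel \<and>
          (\<forall>z1\<in>{1..r}. \<forall>z2\<in>{1..r}. integrable (F z1 z2) \<phi>) \<and>
          (\<forall>z1\<in>{1..r'}. \<forall>z2\<in>{1..r'}. integrable (F' z1 z2) \<phi>) \<and>
          (\<forall>x1 x2 x3. wsbm_joint_cdf r p F 4 three_star [x1, x2, x3]
                     = wsbm_joint_cdf r' p' F' 4 three_star [x1, x2, x3]) \<and>
          (\<forall>x1 x2 x3. wsbm_joint_cdf r p F 4 path4 [x1, x2, x3]
                     = wsbm_joint_cdf r' p' F' 4 path4 [x1, x2, x3])
          \<longrightarrow> (\<exists>\<sigma>. bij_betw \<sigma> {1..r} {1..r'} \<and>
                  (\<forall>z\<in>{1..r}. p' (\<sigma> z) = p z) \<and>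
                  (\<forall>z1\<in>{1..r}. \<forall>z2\<in>{1..r}.
                     (\<integral>x. \<phi> x \<partial>(F' (\<sigma> z1) (\<sigma> z2))) = (\<integral>x. \<phi> x \<partial>(F z1 z2)))))"
proof (intro conjI allI impI)
  show "r = r'" if "\<forall>x1 x2. wsbm_joint_cdf r p F 3 two_star [x1, x2] = wsbm_joint_cdf r' p' F' 3 two_star [x1, x2]"
    using wsbm_two_star_determines_size[OF assms] that by blast
next
  fix \<phi> :: "real \<Rightarrow> real"
  \<comment> \<open>The edge laws themselves coincide.\<close>
  assume "\<phi> \<in> borel_measurable borel \<and>
          (\<forall>z1\<in>{1..r}. \<forall>z2\<in>{1..r}. integrable (F z1 z2) \<phi>) \<and>
          (\<forall>z1\<in>{1..r'}. \<forall>z2\<in>{1..r'}. integrable (F' z1 z2) \<phi>) \<and>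
          (\<forall>x1 x2 x3. wsbm_joint_cdf r p F 4 three_star [x1, x2, x3]
                     = wsbm_joint_cdf r' p' F' 4 three_star [x1, x2, x3]) \<and>
          (\<forall>x1 x2 x3. wsbm_joint_cdf r p F 4 path4 [x1, x2, x3]
                     = wsbm_joint_cdf r' p' F' 4 path4 [x1, x2, x3])"
  then obtain \<sigma> where "bij_betw \<sigma> {1..r} {1..r'}" "\<forall>z\<in>{1..r}. p' (\<sigma> z) = p z"
    and "\<forall>z1\<in>{1..r}. \<forall>z2\<in>{1..r}. F' (\<sigma> z1) (\<sigma> z2) = F z1 z2"
    using wsbm_three_star_path_determine_params[OF assms] by blast
  then show "\<exists>\<sigma>. bij_betw \<sigma> {1..r} {1..r'} \<and> (\<forall>z\<in>{1..r}. p' (\<sigma> z) = p z) \<and>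
      (\<forall>z1\<in>{1..r}. \<forall>z2\<in>{1..r}. (\<integral>x. \<phi> x \<partial>(F' (\<sigma> z1) (\<sigma> z2))) = (\<integral>x. \<phi> x \<partial>(F z1 z2)))"
    by auto
qed

end
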